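(* Let $p>0$ and let $(u_n)_{n\ge0}$ be a sequence in $E^1$ with partial sums $s_n=\sum_{k=0}^n u_k$. If the series $\sum u_n$ is $E_p$ summable to $\nu\in E^1$ and $\sqrt{n}\,D(u_n,\overline{0})=O(1)$ as $n\to\infty$, then the series $\sum u_n$ is bounded, i.e. there is $M>0$ with $D(s_n,\overline{0})<M$ for all $n$.
   Context: $E^1$ denotes the set of fuzzy numbers: functions $u:\mathbb{R}\to[0,1]$ that are normal, fuzzy convex, upper semicontinuous, and have compact support $\overline{\{t:u(t)>0\}}$. For $\alpha\in(0,1]$ the $\alpha$-level set is $[u]_\alpha=\{t:u(t)\ge\alpha\}$ and $[u]_0=\overline{\{t:u(t)>0\}}$; each is a compact interval $[u^-_\alpha,u^+_\alpha]$. Addition and scalar multiplication are defined levelwise: $[u+v]_\alpha=[u^-_\alpha+v^-_\alpha,u^+_\alpha+v^+_\alpha]$ and $[ku]_\alpha=k[u]_\alpha$ for $k\in\mathbb{R}$. The metric is $D(u,v)=\sup_{\alpha\in[0,1]}\max\{|u^-_\alpha-v^-_\alpha|,|u^+_\alpha-v^+_\alpha|\}$. $\overline{0}$ is the fuzzy number equal to $1$ at $0$ and $0$ elsewhere. A series $\sum u_n$ of fuzzy numbers is $E_p$ summable to $\nu$ if its sequence of partial sums $(s_n)$ has Euler means $\frac{1}{(p+1)^n}\sum_{k=0}^n\binom{n}{k}p^{n-k}s_k$ converging to $\nu$ in $D$. The paper denotes by $bs(F)$ the set of series of fuzzy numbers with bounded partial sums and states the conclusion as $(u_n)\in bs(F)$.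 *)

theory Defs
  imports "HOL-Analysis.Analysis" "HOL-Library.Landau_Symbols"
begin

type_synonym fuzzy = "real \<Rightarrow> real"

definition fuzzy_number :: "fuzzy \<Rightarrow> bool" where
  "fuzzy_number u \<longleftrightarrow>
     (\<forall>t. 0 \<le> u t \<and> u t \<le> 1) \<and>
     (\<exists>t. u t = 1) \<and>
     (\<forall>x y l. 0 \<le> l \<and> l \<le> 1 \<longrightarrow> min (u x) (u y) \<le> u (l * x + (1 - l) * y)) \<and>
     (\<forall>x. \<forall>e>0. \<forall>\<^sub>F y in at x. u y < u x + e) \<and>
     compact (closure {t. u t > 0})"

definition level :: "fuzzy \<Rightarrow> real \<Rightarrow> real set" where
  "level u \<alpha> = (if \<alpha> = 0 then closure {t. u t > 0} else {t. u t \<ge> \<alpha>})"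

definition lower :: "fuzzy \<Rightarrow> real \<Rightarrow> real" where
  "lower u \<alpha> = Inf (level u \<alpha>)"

definition upper :: "fuzzy \<Rightarrow> real \<Rightarrow> real" where
  "upper u \<alpha> = Sup (level u \<alpha>)"

(* the fuzzy number whose alpha-levels (alpha in (0,1]) are [L alpha, U alpha] *)
definition of_levels :: "(real \<Rightarrow> real) \<Rightarrow> (real \<Rightarrow> real) \<Rightarrow> fuzzy" where
  "of_levels L U = (\<lambda>t. Sup ({0} \<union> {\<alpha>. 0 < \<alpha> \<and> \<alpha> \<le> 1 \<and> L \<alpha> \<le> t \<and> t \<le> U \<alpha>}))"

definition fadd :: "fuzzy \<Rightarrow> fuzzy \<Rightarrow> fuzzy" where
  "fadd u v = of_levels (\<lambda>\<alpha>. lower u \<alpha> + lower v \<alpha>) (\<lambda>\<alpha>. upper u \<alpha> + upper v \<alpha>)"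

definition fscale :: "real \<Rightarrow> fuzzy \<Rightarrow> fuzzy" where
  "fscale k u = of_levels
     (\<lambda>\<alpha>. if 0 \<le> k then k * lower u \<alpha> else k * upper u \<alpha>)
     (\<lambda>\<alpha>. if 0 \<le> k then k * upper u \<alpha> else k * lower u \<alpha>)"

definition fzero :: fuzzy where
  "fzero = (\<lambda>t. if t = 0 then 1 else 0)"

definition fdist :: "fuzzy \<Rightarrow> fuzzy \<Rightarrow> real" where
  "fdist u v = (SUP \<alpha>\<in>{0..1}. max \<bar>lower u \<alpha> - lower v \<alpha>\<bar> \<bar>upper u \<alpha> - upper v \<alpha>\<bar>)"

fun fsum_upto :: "(nat \<Rightarrow> fuzzy) \<Rightarrow> nat \<Rightarrow> fuzzy" where
  "fsum_upto f 0 = f 0"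
| "fsum_upto f (Suc n) = fadd (fsum_upto f n) (f (Suc n))"

definition euler_mean :: "real \<Rightarrow> (nat \<Rightarrow> fuzzy) \<Rightarrow> nat \<Rightarrow> fuzzy" where
  "euler_mean p s n = fscale (1 / (p + 1) ^ n)
      (fsum_upto (\<lambda>k. fscale (real (n choose k) * p ^ (n - k)) (s k)) n)"

definition Ep_summable_to :: "real \<Rightarrow> (nat \<Rightarrow> fuzzy) \<Rightarrow> fuzzy \<Rightarrow> bool" where
  "Ep_summable_to p u \<nu> \<longleftrightarrow>
     (\<lambda>n. fdist (euler_mean p (fsum_upto u) n) \<nu>) \<longlonglongrightarrow> 0"

end

theory Submission
  imports Defs
begin

(* The Euler mean of order n of a sequence S is the average of S k against the binomial weights
   Bernstein n k q with q = 1/(p+1).  Since addition and nonnegative scaling act levelwise, the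
   support endpoints of the partial sums and of their Euler means are the real partial sums and
   Euler means of the support endpoints a_j of u_j, and D(w, 0) is at most the larger absolute
   support endpoint of w.  So it suffices to bound real partial sums S_m = a_0 + ... + a_m with
   bounded Euler means and |a_j| sqrt j <= C.  Pick n with m <= n q < m + 1.  Summing the bounds on
   |a_j| gives |S_k - S_m| <= 2C |sqrt k - sqrt m| <= C ((k - m)^2/m + 1), and averaging against the
   binomial weights, whose second moment about m is n q (1 - q) + (n q - m)^2 <= 3m, yields
   |S_m - Euler mean| <= 4C. *)

section \<open>A Tauberian bound for Euler means of real series\<close>

lemma sum_Bernstein_square_deviation:
  "(\<Sum>k\<le>n. (real k - c)\<^sup>2 * Bernstein n k x) = real n * x * (1 - x) + (real n * x - c)\<^sup>2"
proof -
  have *: "\<And>a b y::real. (a - b)\<^sup>2 * y = a * (a - 1) * y + (1 - 2 * b) * a * y + b * b * y"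
    by (simp add: algebra_simps power2_eq_square)
  have "(\<Sum>k\<le>n. (real k - c)\<^sup>2 * Bernstein n k x)
      = real n * (real n - 1) * x\<^sup>2 + (1 - 2 * c) * (real n * x) + c * c"
    by (simp add: * sum.distrib) (simp flip: sum_distrib_left add: mult.assoc)
  then show ?thesis
    by (simp add: algebra_simps power2_eq_square)
qed

lemma inverse_sqrt_le_sqrt_increment:
  "1 / sqrt (real (Suc k)) \<le> 2 * (sqrt (real (Suc k)) - sqrt (real k))"
proof -
  define a where "a = sqrt (real k)"
  define b where "b = sqrt (real (Suc k))"
  have "0 < b" "a\<^sup>2 = real k" "b\<^sup>2 = real k + 1"
    by (simp_all add: a_def b_def)
  moreover have "2 * a * b \<le> a\<^sup>2 + b\<^sup>2"
    using sum_squares_bound[of a b] by simp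
  ultimately have "1 \<le> b * (2 * (b - a))"
    by (simp add: power2_eq_square algebra_simps)
  with \<open>0 < b\<close> show ?thesis
    by (simp add: a_def b_def divide_le_eq mult.commute)
qed

lemma sum_increment_le_sqrt_increment:
  fixes a :: "nat \<Rightarrow> real"
  assumes a: "\<forall>j\<ge>1. \<bar>a j\<bar> * sqrt (real j) \<le> C" and "m \<le> k"
  shows "\<bar>(\<Sum>i\<le>k. a i) - (\<Sum>i\<le>m. a i)\<bar> \<le> 2 * C * (sqrt (real k) - sqrt (real m))"
  using \<open>m \<le> k\<close>
proof (induction k rule: dec_induct)
  case base
  then show ?case by simp
next
  case (step k)
  have "\<bar>a (Suc k)\<bar> \<le> C * (1 / sqrt (real (Suc k)))"
    using a[rule_format, of "Suc k"] by (simp add: le_divide_eq)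
  also have "\<dots> \<le> C * (2 * (sqrt (real (Suc k)) - sqrt (real k)))"
    using a[rule_format, of 1] inverse_sqrt_le_sqrt_increment
    by (intro mult_left_mono) (auto intro: order_trans[OF abs_ge_zero])
  finally show ?case
    using step.IH by (simp add: algebra_simps)
qed

lemma abs_sum_diff_le_sqrt_diff:
  fixes a :: "nat \<Rightarrow> real"
  assumes "\<forall>j\<ge>1. \<bar>a j\<bar> * sqrt (real j) \<le> C"
  shows "\<bar>(\<Sum>i\<le>k. a i) - (\<Sum>i\<le>m. a i)\<bar> \<le> 2 * C * \<bar>sqrt (real k) - sqrt (real m)\<bar>"
proof (cases "m \<le> k")
  case True
  then show ?thesis
    using sum_increment_le_sqrt_increment[OF assms True] by simp
next
  case False
  then show ?thesis
    using sum_increment_le_sqrt_increment[OF assms, of k m] by (simp add: abs_minus_commute)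
qed

lemma two_abs_sqrt_diff_le:
  fixes k m :: real
  assumes "1 \<le> m" "0 \<le> k"
  shows "2 * \<bar>sqrt k - sqrt m\<bar> \<le> (k - m)\<^sup>2 / m + 1"
proof -
  define t where "t = \<bar>sqrt k - sqrt m\<bar>"
  have "(k - m)\<^sup>2 = t\<^sup>2 * (sqrt k + sqrt m)\<^sup>2"
    using assms by (simp add: t_def power2_eq_square algebra_simps)
  moreover have "m \<le> (sqrt k + sqrt m)\<^sup>2"
    using assms power_mono[of "sqrt m" "sqrt k + sqrt m" 2] by simp
  then have "t\<^sup>2 * m \<le> t\<^sup>2 * (sqrt k + sqrt m)\<^sup>2"
    by (simp add: mult_left_mono)
  moreover have "2 * t \<le> t\<^sup>2 + 1"
    using sum_squares_bound[of t 1] by simp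
  ultimately have "2 * t * m \<le> (k - m)\<^sup>2 + m"
    using assms mult_right_mono[of "2 * t" "t\<^sup>2 + 1" m] by (simp add: algebra_simps)
  then show ?thesis
    using assms by (simp add: t_def field_simps)
qed

lemma Euler_mean_eq_Bernstein_sum:
  fixes p :: real
  assumes "0 \<le> p"
  shows "1 / (p + 1) ^ n * (\<Sum>k\<le>n. real (n choose k) * p ^ (n - k) * f k)
       = (\<Sum>k\<le>n. Bernstein n k (1 / (p + 1)) * f k)"
  unfolding sum_distrib_left
proof (rule sum.cong)
  fix k assume "k \<in> {..n}"
  then have "(p + 1) ^ n = (p + 1) ^ k * (p + 1) ^ (n - k)"
    by (simp flip: power_add)
  moreover have "1 - 1 / (p + 1) = p / (p + 1)"
    using assms by (simp add: field_simps)
  ultimately show "1 / (p + 1) ^ n * (real (n choose k) * p ^ (n - k) * f k)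
      = Bernstein n k (1 / (p + 1)) * f k"
    using assms by (simp add: Bernstein_def power_divide field_simps)
qed simp

lemma exists_nat_mult_between:
  fixes q m :: real
  assumes "0 < q" "q \<le> 1" "0 \<le> m"
  obtains n :: nat where "m \<le> real n * q" "real n * q < m + 1"
proof
  define n where "n = nat \<lceil>m / q\<rceil>"
  have "m / q \<le> real n" "real n < m / q + 1"
    using assms by (simp_all add: n_def) linarith
  then show "m \<le> real n * q" "real n * q < m + 1"
    using assms by (simp_all add: field_simps)
qed

lemma partial_sum_near_Bernstein_mean:
  fixes a :: "nat \<Rightarrow> real"
  assumes a: "\<forall>j\<ge>1. \<bar>a j\<bar> * sqrt (real j) \<le> C"
    and x: "0 \<le> x" "x \<le> 1" and "0 < m"
    and n: "real m \<le> real n * x" "real n * x < real m + 1"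
  shows "\<bar>(\<Sum>i\<le>m. a i) - (\<Sum>k\<le>n. Bernstein n k x * (\<Sum>i\<le>k. a i))\<bar> \<le> 4 * C"
proof -
  define S where "S k = (\<Sum>i\<le>k. a i)" for k
  have m: "1 \<le> real m" using \<open>0 < m\<close> by simp
  have "0 \<le> C"
    using a[rule_format, of 1] by (simp add: order_trans[OF abs_ge_zero])
  have dev: "\<bar>S m - S k\<bar> \<le> C * ((real k - real m)\<^sup>2 / real m + 1)" for k
  proof -
    have "\<bar>S m - S k\<bar> \<le> C * (2 * \<bar>sqrt (real k) - sqrt (real m)\<bar>)"
      using abs_sum_diff_le_sqrt_diff[OF a, of k m] by (simp add: S_def abs_minus_commute)
    also have "\<dots> \<le> C * ((real k - real m)\<^sup>2 / real m + 1)"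
      using two_abs_sqrt_diff_le[OF m, of "real k"] \<open>0 \<le> C\<close> by (intro mult_left_mono) auto
    finally show ?thesis .
  qed
  have "S m - (\<Sum>k\<le>n. Bernstein n k x * S k) = (\<Sum>k\<le>n. Bernstein n k x * (S m - S k))"
    by (simp add: right_diff_distrib sum_subtractf flip: sum_distrib_right)
  then have "\<bar>S m - (\<Sum>k\<le>n. Bernstein n k x * S k)\<bar>
      \<le> (\<Sum>k\<le>n. Bernstein n k x * (C * ((real k - real m)\<^sup>2 / real m + 1)))"
    using dev x by (auto simp: abs_mult Bernstein_nonneg intro!: order_trans[OF sum_abs] sum_mono mult_left_mono)
  also have "\<dots> = C / real m * (\<Sum>k\<le>n. (real k - real m)\<^sup>2 * Bernstein n k x) + C"
    by (simp add: algebra_simps sum.distrib sum_distrib_left flip: sum_distrib_right)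
       (simp flip: sum_distrib_left)
  also have "\<dots> = C / real m * (real n * x * (1 - x) + (real n * x - real m)\<^sup>2) + C"
    by (simp add: sum_Bernstein_square_deviation)
  also have "\<dots> \<le> C / real m * (3 * real m) + C"
  proof -
    have "real n * x * (1 - x) \<le> real n * x"
      using x by (intro mult_left_le) auto
    moreover have "(real n * x - real m)\<^sup>2 \<le> 1"
      using n by (intro power_le_one) auto
    ultimately show ?thesis
      using n m \<open>0 \<le> C\<close> by (intro add_right_mono mult_left_mono) auto
  qed
  also have "\<dots> = 4 * C"
    using m by simp
  finally show ?thesis
    by (simp add: S_def)
qed

lemma partial_sums_bounded_if_Euler_means_bounded:
  fixes a :: "nat \<Rightarrow> real" and p B C :: real
  assumes "0 < p" and a: "\<forall>j\<ge>1. \<bar>a j\<bar> * sqrt (real j) \<le> C"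
    and E: "\<forall>n. \<bar>1 / (p + 1) ^ n * (\<Sum>k\<le>n. real (n choose k) * p ^ (n - k) * (\<Sum>i\<le>k. a i))\<bar> \<le> B"
  shows "\<bar>\<Sum>i\<le>m. a i\<bar> \<le> B + \<bar>a 0\<bar> + 4 * C"
proof (cases "m = 0")
  case True
  have "0 \<le> C"
    using a[rule_format, of 1] by (simp add: order_trans[OF abs_ge_zero])
  moreover have "0 \<le> B"
    using E[rule_format, of 0] by (simp add: order_trans[OF abs_ge_zero])
  ultimately show ?thesis
    using True by simp
next
  case False
  define x where "x = 1 / (p + 1)"
  have x: "0 < x" "x \<le> 1"
    using \<open>0 < p\<close> by (simp_all add: x_def)
  obtain n where n: "real m \<le> real n * x" "real n * x < real m + 1"
    using exists_nat_mult_between[OF x, of "real m"] by auto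
  have "\<bar>(\<Sum>k\<le>n. Bernstein n k x * (\<Sum>i\<le>k. a i))\<bar> \<le> B"
    using E[rule_format, of n]
    unfolding Euler_mean_eq_Bernstein_sum[OF less_imp_le[OF \<open>0 < p\<close>]] x_def .
  moreover have "\<bar>(\<Sum>i\<le>m. a i) - (\<Sum>k\<le>n. Bernstein n k x * (\<Sum>i\<le>k. a i))\<bar> \<le> 4 * C"
    using partial_sum_near_Bernstein_mean[OF a _ x(2) _ n] x False by simp
  moreover have "0 \<le> \<bar>a 0\<bar>" by simp
  ultimately show ?thesis
    by linarith
qed

section \<open>Endpoint functions\<close>

(* The Goetschel-Voxman conditions: L and U are the endpoint functions of the levels
   alpha in (0,1] of a fuzzy number whose support is [l0, u0]. *)
locale level_endpoints =
  fixes L U :: "real \<Rightarrow> real" and l0 u0 :: real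
  assumes L_mono: "0 < \<alpha> \<Longrightarrow> \<alpha> \<le> \<beta> \<Longrightarrow> \<beta> \<le> 1 \<Longrightarrow> L \<alpha> \<le> L \<beta>"
    and U_antimono: "0 < \<alpha> \<Longrightarrow> \<alpha> \<le> \<beta> \<Longrightarrow> \<beta> \<le> 1 \<Longrightarrow> U \<beta> \<le> U \<alpha>"
    and L_le_U: "0 < \<alpha> \<Longrightarrow> \<alpha> \<le> 1 \<Longrightarrow> L \<alpha> \<le> U \<alpha>"
    and L_left_approx: "0 < \<alpha> \<Longrightarrow> \<alpha> \<le> 1 \<Longrightarrow> 0 < e \<Longrightarrow> \<exists>\<beta>. 0 < \<beta> \<and> \<beta> < \<alpha> \<and> L \<alpha> - e \<le> L \<beta>"
    and U_left_approx: "0 < \<alpha> \<Longrightarrow> \<alpha> \<le> 1 \<Longrightarrow> 0 < e \<Longrightarrow> \<exists>\<beta>. 0 < \<beta> \<and> \<beta> < \<alpha> \<and> U \<beta> \<le> U \<alpha> + e"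
    and l0_le_L: "0 < \<alpha> \<Longrightarrow> \<alpha> \<le> 1 \<Longrightarrow> l0 \<le> L \<alpha>"
    and U_le_u0: "0 < \<alpha> \<Longrightarrow> \<alpha> \<le> 1 \<Longrightarrow> U \<alpha> \<le> u0"
    and l0_approx: "0 < e \<Longrightarrow> \<exists>\<alpha>. 0 < \<alpha> \<and> \<alpha> \<le> 1 \<and> L \<alpha> \<le> l0 + e"
    and u0_approx: "0 < e \<Longrightarrow> \<exists>\<alpha>. 0 < \<alpha> \<and> \<alpha> \<le> 1 \<and> u0 - e \<le> U \<alpha>"

lemma level_endpoints_cong:
  assumes "level_endpoints L U l0 u0"
    and eq: "\<And>\<alpha>. 0 < \<alpha> \<Longrightarrow> \<alpha> \<le> 1 \<Longrightarrow> L' \<alpha> = L \<alpha> \<and> U' \<alpha> = U \<alpha>"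
  shows "level_endpoints L' U' l0 u0"
proof -
  interpret level_endpoints L U l0 u0 by fact
  show ?thesis
  proof
    fix \<alpha> e :: real assume a: "0 < \<alpha>" "\<alpha> \<le> 1" "0 < e"
    show "\<exists>\<beta>. 0 < \<beta> \<and> \<beta> < \<alpha> \<and> L' \<alpha> - e \<le> L' \<beta>"
      using L_left_approx[OF a] a eq by fastforce
    show "\<exists>\<beta>. 0 < \<beta> \<and> \<beta> < \<alpha> \<and> U' \<beta> \<le> U' \<alpha> + e"
      using U_left_approx[OF a] a eq by fastforce
  next
    fix e :: real assume "0 < e"
    show "\<exists>\<alpha>. 0 < \<alpha> \<and> \<alpha> \<le> 1 \<and> L' \<alpha> \<le> l0 + e"
      using l0_approx[OF \<open>0 < e\<close>] eq by fastforce
    show "\<exists>\<alpha>. 0 < \<alpha> \<and> \<alpha> \<le> 1 \<and> u0 - e \<le> U' \<alpha>"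
      using u0_approx[OF \<open>0 < e\<close>] eq by fastforce
  qed (use eq L_mono U_antimono L_le_U l0_le_L U_le_u0 in \<open>fastforce+\<close>)
qed

lemma level_endpoints_const: "level_endpoints (\<lambda>_. c) (\<lambda>_. c) c c"
  by unfold_locales (auto intro: exI[of _ "1::real"] exI[of _ "\<alpha>/2" for \<alpha>])

lemma level_endpoints_add:
  assumes "level_endpoints L1 U1 l1 u1" "level_endpoints L2 U2 l2 u2"
  shows "level_endpoints (\<lambda>\<alpha>. L1 \<alpha> + L2 \<alpha>) (\<lambda>\<alpha>. U1 \<alpha> + U2 \<alpha>) (l1 + l2) (u1 + u2)"
proof -
  interpret A: level_endpoints L1 U1 l1 u1 by fact
  interpret B: level_endpoints L2 U2 l2 u2 by fact
  show ?thesis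
  proof
    fix \<alpha> e :: real assume a: "0 < \<alpha>" "\<alpha> \<le> 1" "0 < e"
    then have "0 < e / 2" by simp
    obtain \<beta>1 \<beta>2 where "0 < \<beta>1" "\<beta>1 < \<alpha>" "L1 \<alpha> - e / 2 \<le> L1 \<beta>1"
      and "0 < \<beta>2" "\<beta>2 < \<alpha>" "L2 \<alpha> - e / 2 \<le> L2 \<beta>2"
      using A.L_left_approx[OF a(1,2) \<open>0 < e / 2\<close>] B.L_left_approx[OF a(1,2) \<open>0 < e / 2\<close>] by blast
    moreover from this have "L1 \<beta>1 \<le> L1 (max \<beta>1 \<beta>2)" "L2 \<beta>2 \<le> L2 (max \<beta>1 \<beta>2)"
      using a by (auto intro!: A.L_mono B.L_mono)
    ultimately show "\<exists>\<beta>. 0 < \<beta> \<and> \<beta> < \<alpha> \<and> L1 \<alpha> + L2 \<alpha> - e \<le> L1 \<beta> + L2 \<beta>"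
      by (intro exI[of _ "max \<beta>1 \<beta>2"]) auto
    obtain \<beta>1 \<beta>2 where "0 < \<beta>1" "\<beta>1 < \<alpha>" "U1 \<beta>1 \<le> U1 \<alpha> + e / 2"
      and "0 < \<beta>2" "\<beta>2 < \<alpha>" "U2 \<beta>2 \<le> U2 \<alpha> + e / 2"
      using A.U_left_approx[OF a(1,2) \<open>0 < e / 2\<close>] B.U_left_approx[OF a(1,2) \<open>0 < e / 2\<close>] by blast
    moreover from this have "U1 (max \<beta>1 \<beta>2) \<le> U1 \<beta>1" "U2 (max \<beta>1 \<beta>2) \<le> U2 \<beta>2"
      using a by (auto intro!: A.U_antimono B.U_antimono)
    ultimately show "\<exists>\<beta>. 0 < \<beta> \<and> \<beta> < \<alpha> \<and> U1 \<beta> + U2 \<beta> \<le> U1 \<alpha> + U2 \<alpha> + e"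
      by (intro exI[of _ "max \<beta>1 \<beta>2"]) auto
  next
    fix e :: real assume "0 < e"
    then have "0 < e / 2" by simp
    obtain \<alpha>1 \<alpha>2 where "0 < \<alpha>1" "\<alpha>1 \<le> 1" "L1 \<alpha>1 \<le> l1 + e / 2"
      and "0 < \<alpha>2" "\<alpha>2 \<le> 1" "L2 \<alpha>2 \<le> l2 + e / 2"
      using A.l0_approx[OF \<open>0 < e / 2\<close>] B.l0_approx[OF \<open>0 < e / 2\<close>] by blast
    moreover from this have "L1 (min \<alpha>1 \<alpha>2) \<le> L1 \<alpha>1" "L2 (min \<alpha>1 \<alpha>2) \<le> L2 \<alpha>2"
      by (auto intro!: A.L_mono B.L_mono)
    ultimately show "\<exists>\<alpha>. 0 < \<alpha> \<and> \<alpha> \<le> 1 \<and> L1 \<alpha> + L2 \<alpha> \<le> l1 + l2 + e"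
      by (intro exI[of _ "min \<alpha>1 \<alpha>2"]) auto
    obtain \<alpha>1 \<alpha>2 where "0 < \<alpha>1" "\<alpha>1 \<le> 1" "u1 - e / 2 \<le> U1 \<alpha>1"
      and "0 < \<alpha>2" "\<alpha>2 \<le> 1" "u2 - e / 2 \<le> U2 \<alpha>2"
      using A.u0_approx[OF \<open>0 < e / 2\<close>] B.u0_approx[OF \<open>0 < e / 2\<close>] by blast
    moreover from this have "U1 \<alpha>1 \<le> U1 (min \<alpha>1 \<alpha>2)" "U2 \<alpha>2 \<le> U2 (min \<alpha>1 \<alpha>2)"
      by (auto intro!: A.U_antimono B.U_antimono)
    ultimately show "\<exists>\<alpha>. 0 < \<alpha> \<and> \<alpha> \<le> 1 \<and> u1 + u2 - e \<le> U1 \<alpha> + U2 \<alpha>"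
      by (intro exI[of _ "min \<alpha>1 \<alpha>2"]) auto
  qed (auto intro: add_mono A.L_mono B.L_mono A.U_antimono B.U_antimono A.L_le_U B.L_le_U
      A.l0_le_L B.l0_le_L A.U_le_u0 B.U_le_u0)
qed

lemma level_endpoints_scale:
  assumes "level_endpoints L U l0 u0" and "0 \<le> k"
  shows "level_endpoints (\<lambda>\<alpha>. k * L \<alpha>) (\<lambda>\<alpha>. k * U \<alpha>) (k * l0) (k * u0)"
proof -
  interpret level_endpoints L U l0 u0 by fact
  have small: "k * (e / (k + 1)) \<le> e" if "0 < e" for e
    using that \<open>0 \<le> k\<close> by (simp add: field_simps)
  have pos: "0 < e / (k + 1)" if "0 < e" for e
    using that \<open>0 \<le> k\<close> by simp
  show ?thesis
  proof
    fix \<alpha> e :: real assume a: "0 < \<alpha>" "\<alpha> \<le> 1" "0 < e"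
    obtain \<beta> where "0 < \<beta>" "\<beta> < \<alpha>" "L \<alpha> - e / (k + 1) \<le> L \<beta>"
      using L_left_approx[OF a(1,2) pos[OF a(3)]] by blast
    moreover from this have "k * L \<alpha> - k * (e / (k + 1)) \<le> k * L \<beta>"
      using \<open>0 \<le> k\<close> mult_left_mono by (fastforce simp: right_diff_distrib)
    ultimately show "\<exists>\<beta>. 0 < \<beta> \<and> \<beta> < \<alpha> \<and> k * L \<alpha> - e \<le> k * L \<beta>"
      using small[OF a(3)] by (intro exI[of _ \<beta>]) auto
    obtain \<beta> where "0 < \<beta>" "\<beta> < \<alpha>" "U \<beta> \<le> U \<alpha> + e / (k + 1)"
      using U_left_approx[OF a(1,2) pos[OF a(3)]] by blast
    moreover from this have "k * U \<beta> \<le> k * U \<alpha> + k * (e / (k + 1))"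
      using \<open>0 \<le> k\<close> mult_left_mono by (fastforce simp: distrib_left)
    ultimately show "\<exists>\<beta>. 0 < \<beta> \<and> \<beta> < \<alpha> \<and> k * U \<beta> \<le> k * U \<alpha> + e"
      using small[OF a(3)] by (intro exI[of _ \<beta>]) auto
  next
    fix e :: real assume "0 < e"
    obtain \<alpha> where "0 < \<alpha>" "\<alpha> \<le> 1" "L \<alpha> \<le> l0 + e / (k + 1)"
      using l0_approx[OF pos[OF \<open>0 < e\<close>]] by blast
    moreover from this have "k * L \<alpha> \<le> k * l0 + k * (e / (k + 1))"
      using \<open>0 \<le> k\<close> mult_left_mono by (fastforce simp: distrib_left)
    ultimately show "\<exists>\<alpha>. 0 < \<alpha> \<and> \<alpha> \<le> 1 \<and> k * L \<alpha> \<le> k * l0 + e"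
      using small[OF \<open>0 < e\<close>] by (intro exI[of _ \<alpha>]) auto
    obtain \<alpha> where "0 < \<alpha>" "\<alpha> \<le> 1" "u0 - e / (k + 1) \<le> U \<alpha>"
      using u0_approx[OF pos[OF \<open>0 < e\<close>]] by blast
    moreover from this have "k * u0 - k * (e / (k + 1)) \<le> k * U \<alpha>"
      using \<open>0 \<le> k\<close> mult_left_mono by (fastforce simp: right_diff_distrib)
    ultimately show "\<exists>\<alpha>. 0 < \<alpha> \<and> \<alpha> \<le> 1 \<and> k * u0 - e \<le> k * U \<alpha>"
      using small[OF \<open>0 < e\<close>] by (intro exI[of _ \<alpha>]) auto
  qed (use \<open>0 \<le> k\<close> L_mono U_antimono L_le_U l0_le_L U_le_u0 in \<open>auto intro: mult_left_mono\<close>)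
qed

context level_endpoints
begin

lemma le_of_levels_iff:
  assumes a: "0 < \<alpha>" "\<alpha> \<le> 1"
  shows "\<alpha> \<le> of_levels L U t \<longleftrightarrow> L \<alpha> \<le> t \<and> t \<le> U \<alpha>"
proof -
  define A where "A = {\<alpha>. 0 < \<alpha> \<and> \<alpha> \<le> 1 \<and> L \<alpha> \<le> t \<and> t \<le> U \<alpha>}"
  have F: "of_levels L U t = Sup ({0} \<union> A)"
    by (simp add: of_levels_def A_def)
  have bdd: "bdd_above ({0} \<union> A)"
    by (rule bdd_aboveI[of _ 1]) (auto simp: A_def)
  show ?thesis
  proof
    assume "L \<alpha> \<le> t \<and> t \<le> U \<alpha>"
    then have "\<alpha> \<in> {0} \<union> A"
      using a by (simp add: A_def)
    then show "\<alpha> \<le> of_levels L U t"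
      unfolding F using bdd by (rule cSup_upper)
  next
    assume h: "\<alpha> \<le> of_levels L U t"
    have below: "L \<beta> \<le> t \<and> t \<le> U \<beta>" if b: "0 < \<beta>" "\<beta> < \<alpha>" for \<beta>
    proof -
      have "\<beta> < Sup ({0} \<union> A)"
        using h b F by simp
      then obtain \<gamma> where "\<gamma> \<in> {0} \<union> A" "\<beta> < \<gamma>"
        using less_cSup_iff[OF _ bdd] by blast
      then have "\<gamma> \<le> 1" "L \<gamma> \<le> t" "t \<le> U \<gamma>" "\<beta> \<le> \<gamma>"
        using b by (auto simp: A_def)
      then show ?thesis
        using L_mono[OF b(1)] U_antimono[OF b(1)] by (meson order_trans)
    qed
    show "L \<alpha> \<le> t \<and> t \<le> U \<alpha>"
    proof
      show "L \<alpha> \<le> t"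
      proof (rule field_le_epsilon)
        fix e :: real assume "0 < e"
        obtain \<beta> where "0 < \<beta>" "\<beta> < \<alpha>" "L \<alpha> - e \<le> L \<beta>"
          using L_left_approx[OF a \<open>0 < e\<close>] by blast
        then show "L \<alpha> \<le> t + e"
          using below by fastforce
      qed
      show "t \<le> U \<alpha>"
      proof (rule field_le_epsilon)
        fix e :: real assume "0 < e"
        obtain \<beta> where "0 < \<beta>" "\<beta> < \<alpha>" "U \<beta> \<le> U \<alpha> + e"
          using U_left_approx[OF a \<open>0 < e\<close>] by blast
        then show "t \<le> U \<alpha> + e"
          using below by fastforce
      qed
    qed
  qed
qed

lemma level_of_levels:
  assumes "0 < \<alpha>" "\<alpha> \<le> 1"
  shows "level (of_levels L U) \<alpha> = {L \<alpha>..U \<alpha>}"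
  using assms by (auto simp: level_def le_of_levels_iff[OF assms])

lemma of_levels_pos_iff:
  "0 < of_levels L U t \<longleftrightarrow> (\<exists>\<alpha>. 0 < \<alpha> \<and> \<alpha> \<le> 1 \<and> L \<alpha> \<le> t \<and> t \<le> U \<alpha>)"
proof
  assume "0 < of_levels L U t"
  then show "\<exists>\<alpha>. 0 < \<alpha> \<and> \<alpha> \<le> 1 \<and> L \<alpha> \<le> t \<and> t \<le> U \<alpha>"
  proof (rule contrapos_pp)
    assume "\<not> (\<exists>\<alpha>. 0 < \<alpha> \<and> \<alpha> \<le> 1 \<and> L \<alpha> \<le> t \<and> t \<le> U \<alpha>)"
    then have "{\<alpha>. 0 < \<alpha> \<and> \<alpha> \<le> 1 \<and> L \<alpha> \<le> t \<and> t \<le> U \<alpha>} = {}"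
      by blast
    then have "of_levels L U t = Sup {0}"
      by (simp only: of_levels_def Un_empty_right)
    then show "\<not> 0 < of_levels L U t"
      by simp
  qed
next
  assume "\<exists>\<alpha>. 0 < \<alpha> \<and> \<alpha> \<le> 1 \<and> L \<alpha> \<le> t \<and> t \<le> U \<alpha>"
  then obtain \<alpha> where "0 < \<alpha>" "\<alpha> \<le> 1" "L \<alpha> \<le> t \<and> t \<le> U \<alpha>"
    by blast
  then show "0 < of_levels L U t"
    using le_of_levels_iff[of \<alpha> t] by linarith
qed

lemma l0_le_u0: "l0 \<le> u0"
  using l0_le_L[of 1] L_le_U[of 1] U_le_u0[of 1] by simp

lemma level_of_levels_0: "level (of_levels L U) 0 = {l0..u0}"
proof -
  define P where "P = {t. 0 < of_levels L U t}"
  have sub: "P \<subseteq> {l0..u0}"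
  proof
    fix t assume "t \<in> P"
    then obtain \<alpha> where "0 < \<alpha>" "\<alpha> \<le> 1" "L \<alpha> \<le> t" "t \<le> U \<alpha>"
      by (auto simp: P_def of_levels_pos_iff)
    then show "t \<in> {l0..u0}"
      using l0_le_L[of \<alpha>] U_le_u0[of \<alpha>] by auto
  qed
  have inner: "{l0<..<u0} \<subseteq> P"
  proof
    fix t assume "t \<in> {l0<..<u0}"
    then obtain \<alpha>1 \<alpha>2 where "0 < \<alpha>1" "\<alpha>1 \<le> 1" "L \<alpha>1 \<le> t" "0 < \<alpha>2" "\<alpha>2 \<le> 1" "t \<le> U \<alpha>2"
      using l0_approx[of "t - l0"] u0_approx[of "u0 - t"] by auto
    moreover from this have "L (min \<alpha>1 \<alpha>2) \<le> L \<alpha>1" "U \<alpha>2 \<le> U (min \<alpha>1 \<alpha>2)"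
      using L_mono[of "min \<alpha>1 \<alpha>2" \<alpha>1] U_antimono[of "min \<alpha>1 \<alpha>2" \<alpha>2] by auto
    ultimately show "t \<in> P"
      unfolding P_def of_levels_pos_iff mem_Collect_eq by (intro exI[of _ "min \<alpha>1 \<alpha>2"]) auto
  qed
  have "L 1 \<in> P"
    unfolding P_def of_levels_pos_iff mem_Collect_eq using L_le_U[of 1] by (intro exI[of _ 1]) simp
  have "closure P = {l0..u0}"
  proof
    show "closure P \<subseteq> {l0..u0}"
      using sub by (rule closure_minimal) simp
    show "{l0..u0} \<subseteq> closure P"
    proof (cases "l0 < u0")
      case True
      then show ?thesis
        using closure_mono[OF inner] by (simp add: closure_greaterThanLessThan)
    next
      case False
      then have "l0 = u0"
        using l0_le_u0 by simp
      moreover have "L 1 \<in> {l0..u0}"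
        using sub \<open>L 1 \<in> P\<close> by (rule subsetD)
      ultimately have "{l0..u0} \<subseteq> P"
        using \<open>L 1 \<in> P\<close> by simp
      then show ?thesis
        using closure_subset by (rule order_trans)
    qed
  qed
  then show ?thesis
    by (simp add: level_def P_def)
qed

lemma lower_of_levels: "0 < \<alpha> \<Longrightarrow> \<alpha> \<le> 1 \<Longrightarrow> lower (of_levels L U) \<alpha> = L \<alpha>"
  and upper_of_levels: "0 < \<alpha> \<Longrightarrow> \<alpha> \<le> 1 \<Longrightarrow> upper (of_levels L U) \<alpha> = U \<alpha>"
  using L_le_U by (simp_all add: lower_def upper_def level_of_levels)

lemma lower_of_levels_0: "lower (of_levels L U) 0 = l0"
  and upper_of_levels_0: "upper (of_levels L U) 0 = u0"
  using l0_le_u0 by (simp_all add: lower_def upper_def level_of_levels_0)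

end

section \<open>Fuzzy numbers and levelwise arithmetic\<close>

definition regular_fuzzy :: "fuzzy \<Rightarrow> bool" where
  "regular_fuzzy u \<longleftrightarrow> level_endpoints (lower u) (upper u) (lower u 0) (upper u 0)"

lemma regular_of_levels:
  assumes "level_endpoints L U l0 u0"
  shows "regular_fuzzy (of_levels L U)"
proof -
  interpret level_endpoints L U l0 u0 by fact
  show ?thesis
    unfolding regular_fuzzy_def lower_of_levels_0 upper_of_levels_0
    using assms by (rule level_endpoints_cong) (simp add: lower_of_levels upper_of_levels)
qed

context
  fixes u :: fuzzy
  assumes u: "fuzzy_number u"
begin

lemma fuzzy_number_between:
  assumes "\<beta> \<le> u x" "\<beta> \<le> u y" "x \<le> t" "t \<le> y"
  shows "\<beta> \<le> u t"
proof (cases "x = y")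
  case True
  then show ?thesis using assms by simp
next
  case False
  define l where "l = (y - t) / (y - x)"
  have "x < y"
    using False assms by simp
  then have "0 \<le> l" "l \<le> 1" "l * (y - x) = y - t"
    using assms by (simp_all add: l_def field_simps)
  then have "0 \<le> l" "l \<le> 1" "l * x + (1 - l) * y = t"
    by (simp_all add: algebra_simps)
  moreover have "\<forall>x y l. 0 \<le> l \<and> l \<le> 1 \<longrightarrow> min (u x) (u y) \<le> u (l * x + (1 - l) * y)"
    using u by (simp add: fuzzy_number_def)
  ultimately have "min (u x) (u y) \<le> u t"
    by metis
  then show ?thesis
    using assms by simp
qed

lemma closed_superlevel: "closed {t. \<alpha> \<le> u t}"
proof -
  have "open {t. u t < \<alpha>}"
    unfolding open_subopen[of "{t. u t < \<alpha>}"]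
  proof
    fix x assume "x \<in> {t. u t < \<alpha>}"
    then have "u x < \<alpha>"
      by simp
    have "\<forall>x. \<forall>e>0. \<forall>\<^sub>F y in at x. u y < u x + e"
      using u by (simp add: fuzzy_number_def)
    then have "0 < \<alpha> - u x \<longrightarrow> (\<forall>\<^sub>F y in at x. u y < u x + (\<alpha> - u x))"
      by blast
    then have "\<forall>\<^sub>F y in at x. u y < \<alpha>"
      using \<open>u x < \<alpha>\<close> by simp
    with \<open>u x < \<alpha>\<close> have "\<forall>\<^sub>F y in nhds x. u y < \<alpha>"
      by (simp add: eventually_nhds_conv_at)
    then show "\<exists>T. open T \<and> x \<in> T \<and> T \<subseteq> {t. u t < \<alpha>}"
      unfolding eventually_nhds by blast
  qed
  then show ?thesis
    by (simp add: closed_def Compl_eq not_le)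
qed

lemma compact_level: "0 \<le> \<alpha> \<Longrightarrow> compact (level u \<alpha>)"
proof (cases "\<alpha> = 0")
  case True
  then show ?thesis using u by (simp add: level_def fuzzy_number_def)
next
  case False
  assume "0 \<le> \<alpha>"
  with False have "level u \<alpha> = closure {t. 0 < u t} \<inter> {t. \<alpha> \<le> u t}"
    by (auto simp: level_def intro: closure_subset[THEN subsetD])
  moreover have "compact (closure {t. 0 < u t})"
    using u by (simp add: fuzzy_number_def)
  ultimately show ?thesis
    by (simp add: compact_Int_closed closed_superlevel)
qed

lemma level_antimono: "0 \<le> \<alpha> \<Longrightarrow> \<alpha> \<le> \<beta> \<Longrightarrow> level u \<beta> \<subseteq> level u \<alpha>"
  by (auto simp: level_def intro: closure_subset[THEN subsetD])

lemma level_nonempty: "0 \<le> \<alpha> \<Longrightarrow> \<alpha> \<le> 1 \<Longrightarrow> level u \<alpha> \<noteq> {}"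
proof -
  obtain t where "u t = 1"
    using u by (auto simp: fuzzy_number_def)
  then have "t \<in> level u 1"
    by (simp add: level_def)
  then show "0 \<le> \<alpha> \<Longrightarrow> \<alpha> \<le> 1 \<Longrightarrow> level u \<alpha> \<noteq> {}"
    using level_antimono by blast
qed

lemma bdd_level:
  assumes "0 \<le> \<alpha>"
  shows "bdd_below (level u \<alpha>)" "bdd_above (level u \<alpha>)"
  using compact_imp_bounded[OF compact_level[OF assms]]
  by (simp_all add: bounded_imp_bdd_below bounded_imp_bdd_above)

lemma lower_in_level: "0 \<le> \<alpha> \<Longrightarrow> \<alpha> \<le> 1 \<Longrightarrow> lower u \<alpha> \<in> level u \<alpha>"
  unfolding lower_def
  by (intro closed_contains_Inf level_nonempty bdd_level compact_imp_closed compact_level)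

lemma upper_in_level: "0 \<le> \<alpha> \<Longrightarrow> \<alpha> \<le> 1 \<Longrightarrow> upper u \<alpha> \<in> level u \<alpha>"
  unfolding upper_def
  by (intro closed_contains_Sup level_nonempty bdd_level compact_imp_closed compact_level)

lemma lower_le: "0 \<le> \<alpha> \<Longrightarrow> t \<in> level u \<alpha> \<Longrightarrow> lower u \<alpha> \<le> t"
  unfolding lower_def by (rule cInf_lower) (simp_all add: bdd_level)

lemma le_upper: "0 \<le> \<alpha> \<Longrightarrow> t \<in> level u \<alpha> \<Longrightarrow> t \<le> upper u \<alpha>"
  unfolding upper_def by (rule cSup_upper) (simp_all add: bdd_level)

lemma level_eq_atLeastAtMost:
  assumes "0 < \<alpha>" "\<alpha> \<le> 1"
  shows "level u \<alpha> = {lower u \<alpha>..upper u \<alpha>}"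
proof
  show "level u \<alpha> \<subseteq> {lower u \<alpha>..upper u \<alpha>}"
    using assms lower_le le_upper by auto
  show "{lower u \<alpha>..upper u \<alpha>} \<subseteq> level u \<alpha>"
  proof
    fix t assume "t \<in> {lower u \<alpha>..upper u \<alpha>}"
    moreover have "\<alpha> \<le> u (lower u \<alpha>)" "\<alpha> \<le> u (upper u \<alpha>)"
      using assms lower_in_level[of \<alpha>] upper_in_level[of \<alpha>] by (simp_all add: level_def)
    ultimately have "\<alpha> \<le> u t"
      using fuzzy_number_between[of \<alpha> "lower u \<alpha>" "upper u \<alpha>" t] by simp
    then show "t \<in> level u \<alpha>"
      using assms by (simp add: level_def)
  qed
qed

lemma lower_mono: "0 \<le> \<alpha> \<Longrightarrow> \<alpha> \<le> \<beta> \<Longrightarrow> \<beta> \<le> 1 \<Longrightarrow> lower u \<alpha> \<le> lower u \<beta>"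
  using lower_le lower_in_level level_antimono by (meson order_trans subsetD)

lemma upper_antimono: "0 \<le> \<alpha> \<Longrightarrow> \<alpha> \<le> \<beta> \<Longrightarrow> \<beta> \<le> 1 \<Longrightarrow> upper u \<beta> \<le> upper u \<alpha>"
  using le_upper upper_in_level level_antimono by (meson order_trans subsetD)

lemma lower_le_upper: "0 \<le> \<alpha> \<Longrightarrow> \<alpha> \<le> 1 \<Longrightarrow> lower u \<alpha> \<le> upper u \<alpha>"
  using lower_le upper_in_level by blast

lemma superlevel_left_closed:
  assumes "0 < \<alpha>" and sub: "\<And>\<beta>. 0 < \<beta> \<Longrightarrow> \<beta> < \<alpha> \<Longrightarrow> t \<in> level u \<beta>"
  shows "t \<in> level u \<alpha>"
proof -
  have "\<alpha> \<le> u t"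
    using assms(1) by (rule dense_le_bounded) (use sub in \<open>simp add: level_def\<close>)
  then show ?thesis
    using assms(1) by (simp add: level_def)
qed

lemma lower_left_approx:
  assumes a: "0 < \<alpha>" "\<alpha> \<le> 1" and "0 < e"
  shows "\<exists>\<beta>. 0 < \<beta> \<and> \<beta> < \<alpha> \<and> lower u \<alpha> - e \<le> lower u \<beta>"
proof (rule ccontr)
  assume "\<not> ?thesis"
  then have "lower u \<alpha> - e \<in> level u \<beta>" if "0 < \<beta>" "\<beta> < \<alpha>" for \<beta>
    using that a \<open>0 < e\<close> lower_le_upper[of \<alpha>] upper_antimono[of \<beta> \<alpha>]
    by (auto simp: level_eq_atLeastAtMost)
  then have "lower u \<alpha> - e \<in> level u \<alpha>"
    by (rule superlevel_left_closed[OF a(1)])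
  then show False
    using lower_le[of \<alpha>] a \<open>0 < e\<close> by fastforce
qed

lemma upper_left_approx:
  assumes a: "0 < \<alpha>" "\<alpha> \<le> 1" and "0 < e"
  shows "\<exists>\<beta>. 0 < \<beta> \<and> \<beta> < \<alpha> \<and> upper u \<beta> \<le> upper u \<alpha> + e"
proof (rule ccontr)
  assume "\<not> ?thesis"
  then have "upper u \<alpha> + e \<in> level u \<beta>" if "0 < \<beta>" "\<beta> < \<alpha>" for \<beta>
    using that a \<open>0 < e\<close> lower_le_upper[of \<alpha>] lower_mono[of \<beta> \<alpha>]
    by (auto simp: level_eq_atLeastAtMost)
  then have "upper u \<alpha> + e \<in> level u \<alpha>"
    by (rule superlevel_left_closed[OF a(1)])
  then show False
    using le_upper[of \<alpha>] a \<open>0 < e\<close> by fastforce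
qed

lemma support_approx:
  assumes "0 < e" and t: "t \<in> level u 0"
  obtains \<alpha> y where "0 < \<alpha>" "\<alpha> \<le> 1" "y \<in> level u \<alpha>" "\<bar>y - t\<bar> < e"
proof -
  obtain y where "0 < u y" "dist y t < e"
    using t \<open>0 < e\<close> by (auto simp: level_def closure_approachable)
  moreover have "u y \<le> 1"
    using u by (simp add: fuzzy_number_def)
  ultimately show ?thesis
    by (intro that[of "u y" y]) (simp_all add: level_def dist_real_def)
qed

lemma regular_fuzzy_number: "regular_fuzzy u"
  unfolding regular_fuzzy_def
proof
  fix e :: real assume "0 < e"
  obtain \<alpha> y where "0 < \<alpha>" "\<alpha> \<le> 1" "y \<in> level u \<alpha>" "\<bar>y - lower u 0\<bar> < e"
    using support_approx[OF \<open>0 < e\<close> lower_in_level[of 0]] by auto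
  moreover from this have "lower u \<alpha> \<le> y"
    by (simp add: lower_le)
  ultimately show "\<exists>\<alpha>. 0 < \<alpha> \<and> \<alpha> \<le> 1 \<and> lower u \<alpha> \<le> lower u 0 + e"
    by (intro exI[of _ \<alpha>]) auto
  obtain \<alpha> y where "0 < \<alpha>" "\<alpha> \<le> 1" "y \<in> level u \<alpha>" "\<bar>y - upper u 0\<bar> < e"
    using support_approx[OF \<open>0 < e\<close> upper_in_level[of 0]] by auto
  moreover from this have "y \<le> upper u \<alpha>"
    by (simp add: le_upper)
  ultimately show "\<exists>\<alpha>. 0 < \<alpha> \<and> \<alpha> \<le> 1 \<and> upper u 0 - e \<le> upper u \<alpha>"
    by (intro exI[of _ \<alpha>]) auto
qed (auto intro: lower_mono upper_antimono lower_le_upper lower_left_approx upper_left_approx)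

end

lemma lower_upper_of_level_endpoints:
  assumes "level_endpoints L U l0 u0" "0 \<le> \<alpha>" "\<alpha> \<le> 1" "L 0 = l0" "U 0 = u0"
  shows "lower (of_levels L U) \<alpha> = L \<alpha>" "upper (of_levels L U) \<alpha> = U \<alpha>"
proof -
  interpret level_endpoints L U l0 u0 by fact
  show "lower (of_levels L U) \<alpha> = L \<alpha>" "upper (of_levels L U) \<alpha> = U \<alpha>"
    using assms(2-) lower_of_levels upper_of_levels lower_of_levels_0 upper_of_levels_0
    by (cases "\<alpha> = 0"; simp)+
qed

lemma
  assumes "regular_fuzzy u" "regular_fuzzy v"
  shows regular_fadd: "regular_fuzzy (fadd u v)"
    and lower_fadd: "0 \<le> \<alpha> \<Longrightarrow> \<alpha> \<le> 1 \<Longrightarrow> lower (fadd u v) \<alpha> = lower u \<alpha> + lower v \<alpha>"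
    and upper_fadd: "0 \<le> \<alpha> \<Longrightarrow> \<alpha> \<le> 1 \<Longrightarrow> upper (fadd u v) \<alpha> = upper u \<alpha> + upper v \<alpha>"
proof -
  have P: "level_endpoints (\<lambda>\<alpha>. lower u \<alpha> + lower v \<alpha>) (\<lambda>\<alpha>. upper u \<alpha> + upper v \<alpha>)
      (lower u 0 + lower v 0) (upper u 0 + upper v 0)"
    using assms unfolding regular_fuzzy_def by (rule level_endpoints_add)
  then show "regular_fuzzy (fadd u v)"
    unfolding fadd_def by (rule regular_of_levels)
  show "0 \<le> \<alpha> \<Longrightarrow> \<alpha> \<le> 1 \<Longrightarrow> lower (fadd u v) \<alpha> = lower u \<alpha> + lower v \<alpha>"
    "0 \<le> \<alpha> \<Longrightarrow> \<alpha> \<le> 1 \<Longrightarrow> upper (fadd u v) \<alpha> = upper u \<alpha> + upper v \<alpha>"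
    unfolding fadd_def using lower_upper_of_level_endpoints[OF P] by simp_all
qed

lemma
  assumes "regular_fuzzy u" "0 \<le> k"
  shows regular_fscale: "regular_fuzzy (fscale k u)"
    and lower_fscale: "0 \<le> \<alpha> \<Longrightarrow> \<alpha> \<le> 1 \<Longrightarrow> lower (fscale k u) \<alpha> = k * lower u \<alpha>"
    and upper_fscale: "0 \<le> \<alpha> \<Longrightarrow> \<alpha> \<le> 1 \<Longrightarrow> upper (fscale k u) \<alpha> = k * upper u \<alpha>"
proof -
  have P: "level_endpoints (\<lambda>\<alpha>. k * lower u \<alpha>) (\<lambda>\<alpha>. k * upper u \<alpha>) (k * lower u 0) (k * upper u 0)"
    using assms unfolding regular_fuzzy_def by (rule level_endpoints_scale)
  have eq: "fscale k u = of_levels (\<lambda>\<alpha>. k * lower u \<alpha>) (\<lambda>\<alpha>. k * upper u \<alpha>)"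
    using assms(2) by (simp add: fscale_def)
  show "regular_fuzzy (fscale k u)"
    unfolding eq using P by (rule regular_of_levels)
  show "0 \<le> \<alpha> \<Longrightarrow> \<alpha> \<le> 1 \<Longrightarrow> lower (fscale k u) \<alpha> = k * lower u \<alpha>"
    "0 \<le> \<alpha> \<Longrightarrow> \<alpha> \<le> 1 \<Longrightarrow> upper (fscale k u) \<alpha> = k * upper u \<alpha>"
    unfolding eq using lower_upper_of_level_endpoints[OF P] by simp_all
qed

lemma
  assumes "\<And>k. k \<le> n \<Longrightarrow> regular_fuzzy (f k)"
  shows regular_fsum_upto: "regular_fuzzy (fsum_upto f n)"
    and lower_fsum_upto: "0 \<le> \<alpha> \<Longrightarrow> \<alpha> \<le> 1 \<Longrightarrow> lower (fsum_upto f n) \<alpha> = (\<Sum>k\<le>n. lower (f k) \<alpha>)"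
    and upper_fsum_upto: "0 \<le> \<alpha> \<Longrightarrow> \<alpha> \<le> 1 \<Longrightarrow> upper (fsum_upto f n) \<alpha> = (\<Sum>k\<le>n. upper (f k) \<alpha>)"
  using assms
  by (induction n) (simp_all add: regular_fadd lower_fadd upper_fadd)

lemma fzero_eq_of_levels: "fzero = of_levels (\<lambda>_. 0) (\<lambda>_. 0)"
proof
  fix t :: real
  show "fzero t = of_levels (\<lambda>_. 0) (\<lambda>_. 0) t"
  proof (cases "t = 0")
    case True
    then have "{0} \<union> {\<alpha>. 0 < \<alpha> \<and> \<alpha> \<le> 1 \<and> 0 \<le> t \<and> t \<le> 0} = {0..1::real}"
      by auto
    then show ?thesis
      using True by (simp add: fzero_def of_levels_def)
  next
    case False
    then have empty: "{\<alpha>. 0 < \<alpha> \<and> \<alpha> \<le> 1 \<and> 0 \<le> t \<and> t \<le> (0::real)} = {}"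
      by auto
    show ?thesis
      unfolding fzero_def of_levels_def empty using False by simp
  qed
qed

lemma regular_fzero: "regular_fuzzy fzero"
  unfolding fzero_eq_of_levels by (rule regular_of_levels[OF level_endpoints_const])

lemma lower_fzero: "0 \<le> \<alpha> \<Longrightarrow> \<alpha> \<le> 1 \<Longrightarrow> lower fzero \<alpha> = 0"
  and upper_fzero: "0 \<le> \<alpha> \<Longrightarrow> \<alpha> \<le> 1 \<Longrightarrow> upper fzero \<alpha> = 0"
  unfolding fzero_eq_of_levels
  by (simp_all add: lower_upper_of_level_endpoints[OF level_endpoints_const])

lemma regular_fuzzy_level_bounds:
  assumes "regular_fuzzy u" "0 \<le> \<alpha>" "\<alpha> \<le> 1"
  shows "lower u 0 \<le> lower u \<alpha>" "lower u \<alpha> \<le> upper u \<alpha>" "upper u \<alpha> \<le> upper u 0"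
proof -
  interpret level_endpoints "lower u" "upper u" "lower u 0" "upper u 0"
    using assms(1) by (simp add: regular_fuzzy_def)
  show "lower u 0 \<le> lower u \<alpha>" "lower u \<alpha> \<le> upper u \<alpha>" "upper u \<alpha> \<le> upper u 0"
    using assms(2,3) l0_le_L L_le_U U_le_u0 l0_le_u0 by (cases "\<alpha> = 0"; simp)+
qed

lemma
  assumes "regular_fuzzy u" "regular_fuzzy v"
  shows lower_support_dist_le_fdist: "\<bar>lower u 0 - lower v 0\<bar> \<le> fdist u v"
    and upper_support_dist_le_fdist: "\<bar>upper u 0 - upper v 0\<bar> \<le> fdist u v"
proof -
  define d where "d \<alpha> = max \<bar>lower u \<alpha> - lower v \<alpha>\<bar> \<bar>upper u \<alpha> - upper v \<alpha>\<bar>" for \<alpha>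
  have "d \<alpha> \<le> (\<bar>lower u 0\<bar> + \<bar>upper u 0\<bar>) + (\<bar>lower v 0\<bar> + \<bar>upper v 0\<bar>)" if "\<alpha> \<in> {0..1}" for \<alpha>
  proof -
    from that have "0 \<le> \<alpha>" "\<alpha> \<le> 1" by simp_all
    from regular_fuzzy_level_bounds[OF assms(1) this] regular_fuzzy_level_bounds[OF assms(2) this]
    show ?thesis
      unfolding d_def by (simp add: abs_le_iff) argo
  qed
  then have "d 0 \<le> fdist u v"
    unfolding fdist_def d_def[symmetric] by (intro cSUP_upper bdd_aboveI2) auto
  then show "\<bar>lower u 0 - lower v 0\<bar> \<le> fdist u v" "\<bar>upper u 0 - upper v 0\<bar> \<le> fdist u v"
    by (simp_all add: d_def)
qed

lemma fdist_fzero_le: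
  assumes "regular_fuzzy u"
  shows "fdist u fzero \<le> max \<bar>lower u 0\<bar> \<bar>upper u 0\<bar>"
  unfolding fdist_def
proof (rule cSUP_least)
  fix \<alpha> :: real assume "\<alpha> \<in> {0..1}"
  then show "max \<bar>lower u \<alpha> - lower fzero \<alpha>\<bar> \<bar>upper u \<alpha> - upper fzero \<alpha>\<bar> \<le> max \<bar>lower u 0\<bar> \<bar>upper u 0\<bar>"
    using regular_fuzzy_level_bounds[OF assms, of \<alpha>] by (simp add: lower_fzero upper_fzero) argo
qed simp

lemma
  assumes "0 \<le> p" "\<And>k. regular_fuzzy (s k)"
  shows regular_euler_mean: "regular_fuzzy (euler_mean p s n)"
    and lower_euler_mean: "lower (euler_mean p s n) 0
      = 1 / (p + 1) ^ n * (\<Sum>k\<le>n. real (n choose k) * p ^ (n - k) * lower (s k) 0)"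
    and upper_euler_mean: "upper (euler_mean p s n) 0
      = 1 / (p + 1) ^ n * (\<Sum>k\<le>n. real (n choose k) * p ^ (n - k) * upper (s k) 0)"
proof -
  define f where "f k = fscale (real (n choose k) * p ^ (n - k)) (s k)" for k
  have f: "regular_fuzzy (f k)" for k
    unfolding f_def using assms by (simp add: regular_fscale)
  have eq: "euler_mean p s n = fscale (1 / (p + 1) ^ n) (fsum_upto f n)"
    by (simp add: euler_mean_def f_def[abs_def])
  have "0 \<le> 1 / (p + 1) ^ n"
    using assms(1) by simp
  then show "regular_fuzzy (euler_mean p s n)"
    "lower (euler_mean p s n) 0 = 1 / (p + 1) ^ n * (\<Sum>k\<le>n. real (n choose k) * p ^ (n - k) * lower (s k) 0)"
    "upper (euler_mean p s n) 0 = 1 / (p + 1) ^ n * (\<Sum>k\<le>n. real (n choose k) * p ^ (n - k) * upper (s k) 0)"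
    unfolding eq using assms f
    by (simp_all add: regular_fscale lower_fscale upper_fscale regular_fsum_upto lower_fsum_upto
        upper_fsum_upto) (simp_all add: f_def lower_fscale upper_fscale)
qed


lemma
  assumes "regular_fuzzy u"
  shows abs_lower_support_le_fdist_fzero: "\<bar>lower u 0\<bar> \<le> fdist u fzero"
    and abs_upper_support_le_fdist_fzero: "\<bar>upper u 0\<bar> \<le> fdist u fzero"
  using lower_support_dist_le_fdist[OF assms regular_fzero] upper_support_dist_le_fdist[OF assms regular_fzero]
  by (simp_all add: lower_fzero upper_fzero)

section \<open>Support endpoints of Euler means\<close>

lemma Ep_summable_imp_bounded_support_means:
  assumes "0 \<le> p" "\<And>n. regular_fuzzy (u n)" "regular_fuzzy \<nu>" "Ep_summable_to p u \<nu>"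
  obtains K where
    "\<forall>n. \<bar>1 / (p + 1) ^ n * (\<Sum>k\<le>n. real (n choose k) * p ^ (n - k) * (\<Sum>i\<le>k. lower (u i) 0))\<bar>
       \<le> \<bar>lower \<nu> 0\<bar> + K"
    "\<forall>n. \<bar>1 / (p + 1) ^ n * (\<Sum>k\<le>n. real (n choose k) * p ^ (n - k) * (\<Sum>i\<le>k. upper (u i) 0))\<bar>
       \<le> \<bar>upper \<nu> 0\<bar> + K"
proof -
  have s: "regular_fuzzy (fsum_upto u k)" for k
    using assms(2) by (rule regular_fsum_upto)
  have "Bseq (\<lambda>n. fdist (euler_mean p (fsum_upto u) n) \<nu>)"
    using assms(4) unfolding Ep_summable_to_def by (intro convergent_imp_Bseq convergentI)
  then obtain K where "\<And>n. norm (fdist (euler_mean p (fsum_upto u) n) \<nu>) \<le> K"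
    by (auto simp: Bseq_def)
  then have K: "fdist (euler_mean p (fsum_upto u) n) \<nu> \<le> K" for n
    by (metis abs_le_D1 real_norm_def)
  have E: "regular_fuzzy (euler_mean p (fsum_upto u) n)" for n
    using assms(1) s by (rule regular_euler_mean)
  show ?thesis
  proof (rule that; intro allI)
    fix n
    show "\<bar>1 / (p + 1) ^ n * (\<Sum>k\<le>n. real (n choose k) * p ^ (n - k) * (\<Sum>i\<le>k. lower (u i) 0))\<bar>
       \<le> \<bar>lower \<nu> 0\<bar> + K"
      using lower_support_dist_le_fdist[OF E assms(3), of n] K[of n]
      by (simp add: lower_euler_mean[OF assms(1) s] lower_fsum_upto[OF assms(2)])
    show "\<bar>1 / (p + 1) ^ n * (\<Sum>k\<le>n. real (n choose k) * p ^ (n - k) * (\<Sum>i\<le>k. upper (u i) 0))\<bar>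
       \<le> \<bar>upper \<nu> 0\<bar> + K"
      using upper_support_dist_le_fdist[OF E assms(3), of n] K[of n]
      by (simp add: upper_euler_mean[OF assms(1) s] upper_fsum_upto[OF assms(2)])
  qed
qed

lemma bigo_one_imp_bounded:
  fixes f :: "nat \<Rightarrow> real"
  assumes "f \<in> O(\<lambda>_. 1)"
  obtains C where "\<And>n. \<bar>f n\<bar> \<le> C"
proof -
  obtain c where "0 < c" "eventually (\<lambda>n. norm (f n) \<le> c * norm (1::real)) at_top"
    using landau_o.bigE[OF assms] by blast
  then have "Bseq f"
    unfolding Bseq_conv_Bfun Bfun_def by auto
  then show ?thesis
    by (metis BseqE real_norm_def that)
qed

lemma bigo_sqrt_fdist_imp_support_bounds:
  assumes u: "\<And>n. regular_fuzzy (u n)"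
    and "(\<lambda>n. sqrt (real n) * fdist (u n) fzero) \<in> O(\<lambda>_. 1)"
  obtains C where "\<forall>j\<ge>1. \<bar>lower (u j) 0\<bar> * sqrt (real j) \<le> C"
    "\<forall>j\<ge>1. \<bar>upper (u j) 0\<bar> * sqrt (real j) \<le> C"
proof -
  obtain C where C: "\<And>n. \<bar>sqrt (real n) * fdist (u n) fzero\<bar> \<le> C"
    using bigo_one_imp_bounded[OF assms(2)] by blast
  have "0 \<le> fdist (u j) fzero" for j
    using abs_lower_support_le_fdist_fzero[OF u] by (rule order_trans[OF abs_ge_zero])
  then have "fdist (u j) fzero * sqrt (real j) \<le> C" for j
    using C[of j] by (simp add: abs_mult mult.commute)
  moreover have "\<bar>lower (u j) 0\<bar> * sqrt (real j) \<le> fdist (u j) fzero * sqrt (real j)"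
    "\<bar>upper (u j) 0\<bar> * sqrt (real j) \<le> fdist (u j) fzero * sqrt (real j)" for j
    using abs_lower_support_le_fdist_fzero[OF u] abs_upper_support_le_fdist_fzero[OF u]
    by (simp_all add: mult_right_mono)
  ultimately show ?thesis
    using that by (meson order_trans)
qed

lemma Ep_summable_imp_bounded_support_partial_sums:
  assumes "0 < p" "\<And>n. regular_fuzzy (u n)" "regular_fuzzy \<nu>" "Ep_summable_to p u \<nu>"
    and "\<forall>j\<ge>1. \<bar>lower (u j) 0\<bar> * sqrt (real j) \<le> C"
    and "\<forall>j\<ge>1. \<bar>upper (u j) 0\<bar> * sqrt (real j) \<le> C"
  obtains B where "\<And>m. \<bar>\<Sum>i\<le>m. lower (u i) 0\<bar> \<le> B" "\<And>m. \<bar>\<Sum>i\<le>m. upper (u i) 0\<bar> \<le> B"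
proof -
  obtain K where E:
    "\<forall>n. \<bar>1 / (p + 1) ^ n * (\<Sum>k\<le>n. real (n choose k) * p ^ (n - k) * (\<Sum>i\<le>k. lower (u i) 0))\<bar>
       \<le> \<bar>lower \<nu> 0\<bar> + K"
    "\<forall>n. \<bar>1 / (p + 1) ^ n * (\<Sum>k\<le>n. real (n choose k) * p ^ (n - k) * (\<Sum>i\<le>k. upper (u i) 0))\<bar>
       \<le> \<bar>upper \<nu> 0\<bar> + K"
    using Ep_summable_imp_bounded_support_means[OF _ assms(2-4)] assms(1) by auto
  have "\<bar>\<Sum>i\<le>m. lower (u i) 0\<bar> \<le> \<bar>lower \<nu> 0\<bar> + K + \<bar>lower (u 0) 0\<bar> + 4 * C"
    "\<bar>\<Sum>i\<le>m. upper (u i) 0\<bar> \<le> \<bar>upper \<nu> 0\<bar> + K + \<bar>upper (u 0) 0\<bar> + 4 * C" for m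
    using assms(5,6) E by (intro partial_sums_bounded_if_Euler_means_bounded[OF assms(1)]; simp)+
  then show ?thesis
    using that by (meson max.cobounded1 max.cobounded2 order_trans)
qed

theorem mainTheorem6:
  fixes p :: real and u :: "nat \<Rightarrow> fuzzy" and \<nu> :: fuzzy
  assumes "p > 0"
    and "\<And>n. fuzzy_number (u n)"
    and "fuzzy_number \<nu>"
    and "Ep_summable_to p u \<nu>"
    and "(\<lambda>n. sqrt (real n) * fdist (u n) fzero) \<in> O(\<lambda>_. 1)"
  shows "\<exists>M>0. \<forall>n. fdist (fsum_upto u n) fzero < M"
proof -
  have u: "regular_fuzzy (u n)" for n
    using assms(2) by (rule regular_fuzzy_number)
  obtain C where "\<forall>j\<ge>1. \<bar>lower (u j) 0\<bar> * sqrt (real j) \<le> C"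
    "\<forall>j\<ge>1. \<bar>upper (u j) 0\<bar> * sqrt (real j) \<le> C"
    using bigo_sqrt_fdist_imp_support_bounds[OF u assms(5)] by blast
  then obtain B where B: "\<And>m. \<bar>\<Sum>i\<le>m. lower (u i) 0\<bar> \<le> B" "\<And>m. \<bar>\<Sum>i\<le>m. upper (u i) 0\<bar> \<le> B"
    using Ep_summable_imp_bounded_support_partial_sums[OF assms(1) u regular_fuzzy_number[OF assms(3)] assms(4)]
    by blast
  have "fdist (fsum_upto u n) fzero \<le> B" for n
    using fdist_fzero_le[OF regular_fsum_upto[of n u, OF u]] B[of n]
    by (simp add: lower_fsum_upto[of n u, OF u] upper_fsum_upto[of n u, OF u])
  then have "fdist (fsum_upto u n) fzero < \<bar>B\<bar> + 1" for n
    by (smt (verit))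
  then show ?thesis
    by (intro exI[of _ "\<bar>B\<bar> + 1"]) simp
qed

end
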